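(* Let $n\geq 1$. There is no non-trivial u-p-cycle $u=u_1\cdots u_N$ for $n$-permutations in which the $\Diamond$'s occur periodically with period $3$, i.e., in which $3$ divides $N$ and there is $r\in\{0,1,2\}$ such that for every position $i$, $u_i=\Diamond$ if and only if $i\equiv r\pmod 3$.
   Context: An $n$-permutation is a permutation of $\{1,\ldots,n\}$. For a word $w$ of distinct numbers, $\mathrm{red}(w)$ is obtained by replacing the $i$-th smallest letter by $i$. Let $\Diamond$ be a symbol not among the integers. A word $f=f_1\cdots f_n$ over the positive integers together with $\Diamond$, whose integer letters are pairwise distinct, covers an $n$-permutation $\pi$ if one can substitute real numbers for the occurrences of $\Diamond$ (independently) so that the resulting word has $n$ pairwise distinct entries and reduces to $\pi$; equivalently, $f_i<f_j\iff\pi_i<\pi_j$ for all positions $i,j$ holding integers. A u-p-cycle for $n$-permutations is a cyclic word $u_1\cdots u_N$, $N\geq n$, over this alphabet containing at least one $\Diamond$, indices read modulo $N$, such that each of its $N$ cyclic factors $u_iu_{i+1}\cdots u_{i+n-1}$ ($1\leq i\leq N$) has pairwise distinct integer letters and every $n$-permutation is covered by exactly one of these factors. It is trivial if all its letters are $\Diamond$. *)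

theory Defs
  imports Complex_Main
begin

text \<open>Letters: \<open>None\<close> is the symbol Diamond, \<open>Some k\<close> (k \<ge> 1) is the positive integer k.
  Words are lists; positions are 0-indexed.\<close>

type_synonym letter = "nat option"

definition is_perm :: "nat \<Rightarrow> nat list \<Rightarrow> bool" where
  "is_perm n \<pi> \<longleftrightarrow> length \<pi> = n \<and> distinct \<pi> \<and> set \<pi> = {1..n}"

definition reduces_to :: "real list \<Rightarrow> nat list \<Rightarrow> bool" where
  "reduces_to w \<pi> \<longleftrightarrow> length w = length \<pi> \<and>
     (\<forall>i<length w. \<forall>j<length w. w ! i < w ! j \<longleftrightarrow> \<pi> ! i < \<pi> ! j)"

definition subst :: "letter list \<Rightarrow> (nat \<Rightarrow> real) \<Rightarrow> real list" where
  "subst f g = map (\<lambda>i. case f ! i of None \<Rightarrow> g i | Some k \<Rightarrow> real k) [0..<length f]"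

definition covers :: "letter list \<Rightarrow> nat list \<Rightarrow> bool" where
  "covers f \<pi> \<longleftrightarrow> (\<exists>g. distinct (subst f g) \<and> reduces_to (subst f g) \<pi>)"

definition int_letters_distinct :: "letter list \<Rightarrow> bool" where
  "int_letters_distinct f \<longleftrightarrow> distinct (filter (\<lambda>x. x \<noteq> None) f)"

definition cfactor :: "letter list \<Rightarrow> nat \<Rightarrow> nat \<Rightarrow> letter list" where
  "cfactor u n i = map (\<lambda>j. u ! ((i + j) mod length u)) [0..<n]"

definition up_cycle :: "nat \<Rightarrow> letter list \<Rightarrow> bool" where
  "up_cycle n u \<longleftrightarrow>
     length u \<ge> n \<and>
     Some 0 \<notin> set u \<and>
     None \<in> set u \<and>
     (\<forall>i<length u. int_letters_distinct (cfactor u n i)) \<and>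
     (\<forall>\<pi>. is_perm n \<pi> \<longrightarrow> (\<exists>!i. i < length u \<and> covers (cfactor u n i) \<pi>))"

definition trivial_cycle :: "letter list \<Rightarrow> bool" where
  "trivial_cycle u \<longleftrightarrow> (\<forall>x\<in>set u. x = None)"

text \<open>Diamonds periodic with period 3 (1-indexed positions i = p+1).\<close>
definition diamonds_period3 :: "letter list \<Rightarrow> bool" where
  "diamonds_period3 u \<longleftrightarrow> 3 dvd length u \<and>
     (\<exists>r<3. \<forall>p<length u. u ! p = None \<longleftrightarrow> (p + 1) mod 3 = r)"

end

theory Submission imports Defs begin

text \<open>Every cyclic factor of a cycle with period-3 diamonds has its diamonds on one residue
  class of positions mod 3, its phase, and integers on the other two classes. Order the
  positions of each class \<open>c\<close> by the letters of a factor of phase \<open>c + 1\<close>, and let \<open>\<rho>\<close> be the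
  resulting permutation. The factor \<open>F\<close> covering \<open>\<rho>\<close> has some phase \<open>d\<close>, and on the class
  \<open>d + 1\<close> its letters are then ordered like those of the chosen factor \<open>G\<close> of phase \<open>d + 2\<close>.
  So \<open>F\<close> and \<open>G\<close> agree on their common integer positions, and every position carries an
  integer in one of them; a permutation interpolating both is covered twice.\<close>

lemma nth_eq_of_distinct_filter:
  "distinct (filter P xs) \<Longrightarrow> p < length xs \<Longrightarrow> q < length xs \<Longrightarrow> P (xs ! p)
   \<Longrightarrow> xs ! p = xs ! q \<Longrightarrow> p = q"
proof (induction xs arbitrary: p q)
  case (Cons x xs)
  then show ?case
    by (cases p; cases q) (auto split: if_splits)
qed simp

lemma less_iff_less_if_preserves_less:
  fixes k :: "'a \<Rightarrow> 'b::linorder" and B :: "'a \<Rightarrow> 'c::linorder"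
  assumes "inj_on B Q" and "\<And>p q. p \<in> Q \<Longrightarrow> q \<in> Q \<Longrightarrow> B p < B q \<Longrightarrow> k p < k q"
    and "p \<in> Q" and "q \<in> Q"
  shows "k p < k q \<longleftrightarrow> B p < B q"
  using assms by (metis inj_on_eq_iff less_asym' linorder_neqE)

definition squash :: "nat \<Rightarrow> real" where
  "squash m = 1 - 1 / (real m + 2)"

lemma squash_gt_0: "0 < squash m"
  by (simp add: squash_def field_simps)

lemma squash_less_1: "squash m < 1"
  by (simp add: squash_def)

lemma squash_less_iff [simp]: "squash a < squash b \<longleftrightarrow> a < b"
  by (auto simp: squash_def field_simps)

lemma squash_le_iff [simp]: "squash a \<le> squash b \<longleftrightarrow> a \<le> b"
  by (meson not_less squash_less_iff)

lemma squash_eq_iff [simp]: "squash a = squash b \<longleftrightarrow> a = b"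
  by (metis order.antisym order_refl squash_le_iff)

lemma exists_perm_order_iso:
  fixes key :: "nat \<Rightarrow> 'a::linorder"
  assumes inj: "inj_on key {0..<n}"
  obtains \<sigma> where "is_perm n \<sigma>"
    and "\<And>i j. i < n \<Longrightarrow> j < n \<Longrightarrow> \<sigma> ! i < \<sigma> ! j \<longleftrightarrow> key i < key j"
proof -
  define c where "c i = card {j. j < n \<and> key j < key i}" for i
  define \<sigma> where "\<sigma> = map (\<lambda>i. Suc (c i)) [0..<n]"
  have len: "length \<sigma> = n" and nth: "\<And>i. i < n \<Longrightarrow> \<sigma> ! i = Suc (c i)"
    by (simp_all add: \<sigma>_def)
  have "c i < c j" if "i < n" "key i < key j" for i j
    unfolding c_def using that by (intro psubset_card_mono) auto
  then have ord_\<sigma>: "\<sigma> ! i < \<sigma> ! j \<longleftrightarrow> key i < key j" if "i < n" "j < n" for i j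
    using less_iff_less_if_preserves_less[of key "{0..<n}" c i j] inj that by (simp add: nth)
  have "\<sigma> ! i \<noteq> \<sigma> ! j" if "i < n" "j < n" "i \<noteq> j" for i j
  proof -
    have "key i \<noteq> key j"
      using inj that by (simp add: inj_on_eq_iff)
    then show ?thesis
      using ord_\<sigma>[OF that(1,2)] ord_\<sigma>[OF that(2,1)] by auto
  qed
  then have "distinct \<sigma>"
    by (simp add: distinct_conv_nth len)
  moreover have "set \<sigma> \<subseteq> {1..n}"
  proof
    fix x assume "x \<in> set \<sigma>"
    then obtain i where i: "i < n" "x = Suc (c i)" by (auto simp: \<sigma>_def)
    have "c i \<le> card ({0..<n} - {i})"
      unfolding c_def by (intro card_mono) auto
    then show "x \<in> {1..n}" using i by simp
  qed
  ultimately have "set \<sigma> = {1..n}"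
    using len by (intro card_subset_eq) (auto simp: distinct_card)
  then show thesis
    using that \<open>distinct \<sigma>\<close> len ord_\<sigma> unfolding is_perm_def by blast
qed

lemma exists_interpolating_key:
  fixes A B :: "nat \<Rightarrow> nat"
  assumes "finite P" and inj_A: "inj_on A P" and inj_B: "inj_on B Q"
    and A_pos: "\<forall>x\<in>P. 1 \<le> A x"
    and agree: "\<forall>x\<in>P \<inter> Q. \<forall>y\<in>P \<inter> Q. A x < A y \<longleftrightarrow> B x < B y"
  obtains key :: "nat \<Rightarrow> real" where "\<forall>p\<in>P. key p = A p"
    and "\<forall>p\<in>Q. \<forall>q\<in>Q. key p < key q \<longleftrightarrow> B p < B q" and "inj_on key (P \<union> Q)"
proof -
  define L where "L p = Max (insert 0 (A ` {x \<in> P \<inter> Q. B x < B p}))" for p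
  define key where "key p = (if p \<in> P then real (A p) else L p + squash (B p))" for p
  have fin: "finite (insert 0 (A ` {x \<in> P \<inter> Q. B x < B p}))" for p
    using \<open>finite P\<close> by auto
  have L_ge: "A x \<le> L p" if "x \<in> P \<inter> Q" "B x < B p" for x p
    unfolding L_def using that fin by (intro Max_ge) auto
  have L_mono: "L p \<le> L q" if "B p \<le> B q" for p q
    unfolding L_def using that fin by (intro Max_mono) auto
  have L_less: "L p < A x" if "x \<in> P \<inter> Q" "B p \<le> B x" for x p
    unfolding L_def using that fin A_pos agree by (subst Max_less_iff) auto
  have key_between: "L p < key p" "key p < L p + 1" if "p \<notin> P" for p
    using that squash_gt_0 squash_less_1 by (simp_all add: key_def)
  have key_mono: "key p < key q" if "p \<in> Q" "q \<in> Q" "B p < B q" for p q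
  proof (cases "p \<in> P"; cases "q \<in> P")
    assume "p \<in> P" "q \<in> P"
    then show ?thesis using agree that by (simp add: key_def)
  next
    assume "p \<in> P" "q \<notin> P"
    then show ?thesis using L_ge[of p q] key_between[of q] that by (simp add: key_def)
  next
    assume "p \<notin> P" "q \<in> P"
    then show ?thesis using L_less[of q p] key_between[of p] that by (simp add: key_def)
  next
    assume "p \<notin> P" "q \<notin> P"
    then show ?thesis using L_mono[of p q] that by (simp add: key_def add_mono_thms_linordered_field)
  qed
  have key_iso: "\<forall>p\<in>Q. \<forall>q\<in>Q. key p < key q \<longleftrightarrow> B p < B q"
    using less_iff_less_if_preserves_less[of B Q key] inj_B key_mono by blast
  have "inj_on key (P \<union> Q)"
  proof (rule inj_onI)
    fix p q assume pq: "p \<in> P \<union> Q" "q \<in> P \<union> Q" and eq: "key p = key q"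
    have key_off_P_ne: False if "x \<notin> P" "y \<in> P" "key x = key y" for x y
      using key_between[OF that(1)] that(2,3) unfolding key_def by simp
    show "p = q"
    proof (cases "p \<in> P \<and> q \<in> P")
      case True
      then show ?thesis using eq inj_A by (simp add: key_def inj_on_eq_iff)
    next
      case False
      then have "p \<notin> P \<or> q \<notin> P" by blast
      then have "p \<notin> P \<and> q \<notin> P"
        using key_off_P_ne eq by metis
      then have "p \<in> Q" "q \<in> Q" using pq by auto
      then have "B p = B q"
        using key_iso eq by (metis less_irrefl linorder_neqE_nat)
      then show ?thesis
        using inj_B \<open>p \<in> Q\<close> \<open>q \<in> Q\<close> by (simp add: inj_on_eq_iff)
    qed
  qed
  moreover have "\<forall>p\<in>P. key p = A p"
    by (simp add: key_def)
  ultimately show thesis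
    using that key_iso by blast
qed

definition int_positions :: "letter list \<Rightarrow> nat set" where
  "int_positions f = {p. p < length f \<and> f ! p \<noteq> None}"

definition agrees :: "letter list \<Rightarrow> nat list \<Rightarrow> bool" where
  "agrees f \<pi> \<longleftrightarrow> (\<forall>p\<in>int_positions f. \<forall>q\<in>int_positions f.
     the (f ! p) < the (f ! q) \<longleftrightarrow> \<pi> ! p < \<pi> ! q)"

lemma inj_on_letters:
  assumes "int_letters_distinct f"
  shows "inj_on (\<lambda>p. the (f ! p)) (int_positions f)"
proof (rule inj_onI)
  fix p q assume "p \<in> int_positions f" "q \<in> int_positions f" "the (f ! p) = the (f ! q)"
  then have "f ! p = f ! q" "p < length f" "q < length f" "f ! p \<noteq> None"
    by (auto simp: int_positions_def)
  then show "p = q"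
    using assms nth_eq_of_distinct_filter unfolding int_letters_distinct_def by blast
qed

lemma letter_ge_1:
  assumes "Some 0 \<notin> set f" and "p \<in> int_positions f"
  shows "1 \<le> the (f ! p)"
proof -
  obtain a where "p < length f" "f ! p = Some a"
    using assms(2) by (auto simp: int_positions_def)
  then show ?thesis
    using assms(1) nth_mem by (cases a) fastforce+
qed

lemma subst_nth:
  "p < length f \<Longrightarrow> subst f g ! p = (case f ! p of None \<Rightarrow> g p | Some k \<Rightarrow> real k)"
  by (cases "f ! p") (simp_all add: subst_def)

lemma covers_imp_agrees:
  assumes "covers f \<pi>" shows "agrees f \<pi>"
proof -
  obtain g where red: "reduces_to (subst f g) \<pi>"
    using assms unfolding covers_def by blast
  show ?thesis unfolding agrees_def
  proof (intro ballI)
    fix p q assume "p \<in> int_positions f" "q \<in> int_positions f"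
    then obtain a b where "p < length f" "q < length f" "f ! p = Some a" "f ! q = Some b"
      by (auto simp: int_positions_def)
    moreover have "length (subst f g) = length f"
      by (simp add: subst_def)
    ultimately show "the (f ! p) < the (f ! q) \<longleftrightarrow> \<pi> ! p < \<pi> ! q"
      using red unfolding reduces_to_def by (force simp: subst_nth)
  qed
qed

lemma agrees_imp_covers:
  assumes perm: "is_perm (length f) \<pi>" and "agrees f \<pi>" and "Some 0 \<notin> set f"
  shows "covers f \<pi>"
proof -
  let ?P = "int_positions f" and ?Q = "{0..<length f}" and ?A = "\<lambda>p. the (f ! p)"
  have len: "length \<pi> = length f" and "distinct \<pi>"
    using perm by (auto simp: is_perm_def)
  then have inj_\<pi>: "inj_on ((!) \<pi>) ?Q"
    by (simp add: inj_on_def nth_eq_iff_index_eq)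
  have PQ: "?P \<subseteq> ?Q" by (auto simp: int_positions_def)
  have agree: "\<forall>x\<in>?P \<inter> ?Q. \<forall>y\<in>?P \<inter> ?Q. ?A x < ?A y \<longleftrightarrow> \<pi> ! x < \<pi> ! y"
    using \<open>agrees f \<pi>\<close> by (auto simp: agrees_def)
  have inj_A: "inj_on ?A ?P"
    using agree inj_\<pi> PQ
    by (intro inj_onI) (metis Int_absorb2 inj_on_eq_iff less_irrefl linorder_neqE_nat subsetD)
  have "finite ?P" "\<forall>x\<in>?P. 1 \<le> ?A x"
    using letter_ge_1[OF assms(3)] by (simp_all add: int_positions_def)
  then obtain key :: "nat \<Rightarrow> real" where key_A: "\<forall>p\<in>?P. key p = real (?A p)"
    and key_\<pi>: "\<forall>p\<in>?Q. \<forall>q\<in>?Q. key p < key q \<longleftrightarrow> \<pi> ! p < \<pi> ! q" and "inj_on key (?P \<union> ?Q)"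
    using exists_interpolating_key[OF _ inj_A inj_\<pi> _ agree] by blast
  have subst_key: "subst f key = map key [0..<length f]"
    using key_A by (intro nth_equalityI) (auto simp: subst_nth subst_def int_positions_def
        split: option.split)
  have "distinct (subst f key)"
    using \<open>inj_on key (?P \<union> ?Q)\<close> PQ by (simp add: subst_key distinct_map sup.absorb2)
  moreover have "reduces_to (subst f key) \<pi>"
    using key_\<pi> len by (simp add: subst_key reduces_to_def)
  ultimately show ?thesis unfolding covers_def by blast
qed

lemma exists_perm_ordering_classes:
  fixes cls :: "nat \<Rightarrow> nat" and R :: "nat \<Rightarrow> nat \<Rightarrow> nat"
  assumes inj: "\<And>c. inj_on (R c) {p. p < n \<and> cls p = c}"
  obtains \<rho> where "is_perm n \<rho>"
    and "\<And>p q. p < n \<Longrightarrow> q < n \<Longrightarrow> cls p = cls q \<Longrightarrow>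
      \<rho> ! p < \<rho> ! q \<longleftrightarrow> R (cls p) p < R (cls p) q"
proof -
  define key where "key p = real (cls p) + squash (R (cls p) p)" for p
  have floor_key: "\<lfloor>key p\<rfloor> = int (cls p)" for p
    unfolding key_def using squash_gt_0 squash_less_1 by (intro floor_unique) (auto simp: less_imp_le)
  have "inj_on key {0..<n}"
  proof (rule inj_onI)
    fix p q assume "p \<in> {0..<n}" "q \<in> {0..<n}" and eq: "key p = key q"
    moreover from eq have "cls p = cls q"
      using floor_key[of p] floor_key[of q] by simp
    moreover from eq this have "R (cls p) p = R (cls p) q"
      by (simp add: key_def)
    ultimately show "p = q" using inj[of "cls p"] by (auto simp: inj_on_def)
  qed
  then obtain \<rho> where "is_perm n \<rho>"
    and ord: "\<And>i j. i < n \<Longrightarrow> j < n \<Longrightarrow> \<rho> ! i < \<rho> ! j \<longleftrightarrow> key i < key j"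
    using exists_perm_order_iso by blast
  moreover have "\<rho> ! p < \<rho> ! q \<longleftrightarrow> R (cls p) p < R (cls p) q" if "p < n" "q < n" "cls p = cls q" for p q
    using ord[OF that(1,2)] that(3) by (simp add: key_def)
  ultimately show thesis using that by blast
qed

lemma exists_common_cover:
  assumes len: "length f = n" "length g = n" and pos: "Some 0 \<notin> set f" "Some 0 \<notin> set g"
    and dist: "int_letters_distinct f" "int_letters_distinct g"
    and union: "int_positions f \<union> int_positions g = {0..<n}"
    and agree: "\<forall>p\<in>int_positions f \<inter> int_positions g. \<forall>q\<in>int_positions f \<inter> int_positions g.
        the (f ! p) < the (f ! q) \<longleftrightarrow> the (g ! p) < the (g ! q)"
  obtains \<pi> where "is_perm n \<pi>" and "covers f \<pi>" and "covers g \<pi>"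
proof -
  have "finite (int_positions f)"
    by (simp add: int_positions_def)
  moreover have "\<forall>x\<in>int_positions f. 1 \<le> the (f ! x)"
    using letter_ge_1[OF pos(1)] by blast
  ultimately obtain key :: "nat \<Rightarrow> real"
    where key_f: "\<forall>p\<in>int_positions f. key p = the (f ! p)"
      and key_g: "\<forall>p\<in>int_positions g. \<forall>q\<in>int_positions g. key p < key q \<longleftrightarrow> the (g ! p) < the (g ! q)"
      and inj: "inj_on key (int_positions f \<union> int_positions g)"
    using exists_interpolating_key[OF _ inj_on_letters[OF dist(1)] inj_on_letters[OF dist(2)] _ agree]
    by blast
  obtain \<pi> where \<pi>: "is_perm n \<pi>"
    and ord: "\<And>i j. i < n \<Longrightarrow> j < n \<Longrightarrow> \<pi> ! i < \<pi> ! j \<longleftrightarrow> key i < key j"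
    using exists_perm_order_iso inj[unfolded union] by blast
  have sub: "int_positions f \<subseteq> {0..<n}" "int_positions g \<subseteq> {0..<n}"
    using union by auto
  have "agrees f \<pi>"
    unfolding agrees_def using ord key_f sub by (metis atLeastLessThan_iff of_nat_less_iff subsetD)
  moreover have "agrees g \<pi>"
    unfolding agrees_def using ord key_g sub by (metis atLeastLessThan_iff subsetD)
  ultimately show thesis
    using that \<pi> len pos agrees_imp_covers by simp
qed

lemma int_positions_eq:
  assumes "length f = n" and "\<And>p. p < n \<Longrightarrow> f ! p = None \<longleftrightarrow> D p"
  shows "int_positions f = {p. p < n \<and> \<not> D p}"
  unfolding int_positions_def assms(1) by (intro Collect_cong conj_cong refl) (simp add: assms(2))

lemma exists_common_cover_mod_3:
  assumes len: "length f = n" "length g = n" and pos: "Some 0 \<notin> set f" "Some 0 \<notin> set g"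
    and dist: "int_letters_distinct f" "int_letters_distinct g"
    and residues: "{d, c, e} = {0, 1, 2}"
    and f_None: "\<And>p. p < n \<Longrightarrow> f ! p = None \<longleftrightarrow> p mod 3 = d"
    and g_None: "\<And>p. p < n \<Longrightarrow> g ! p = None \<longleftrightarrow> p mod 3 = e"
    and agree: "\<And>p q. p < n \<Longrightarrow> q < n \<Longrightarrow> p mod 3 = c \<Longrightarrow> q mod 3 = c \<Longrightarrow>
        the (f ! p) < the (f ! q) \<longleftrightarrow> the (g ! p) < the (g ! q)"
  obtains \<pi> where "is_perm n \<pi>" and "covers f \<pi>" and "covers g \<pi>"
proof -
  have "card {d, c, e} = 3"
    using residues by simp
  then have distinct: "d \<noteq> c" "d \<noteq> e" "c \<noteq> e"
    by (auto simp: card_insert_if split: if_splits)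
  have mod_3: "x mod 3 \<in> {d, c, e}" for x :: nat
    unfolding residues using mod_less_divisor[of 3 x] by (auto simp del: mod_less_divisor)
  have "x mod 3 \<noteq> d \<and> x mod 3 \<noteq> e \<longleftrightarrow> x mod 3 = c" for x :: nat
    using mod_3[of x] distinct by auto
  moreover have "x mod 3 \<noteq> d \<or> x mod 3 \<noteq> e" for x :: nat
    using distinct(2) by auto
  moreover note int_positions_eq[OF len(1) f_None] int_positions_eq[OF len(2) g_None]
  ultimately have "int_positions f \<inter> int_positions g = {p. p < n \<and> p mod 3 = c}"
    and "int_positions f \<union> int_positions g = {0..<n}"
    by auto
  then show thesis
    using exists_common_cover[OF len pos dist] agree that by auto
qed

lemma exists_perm_ordered_by_next_phase:
  fixes F :: "nat \<Rightarrow> letter list" and ph :: "nat \<Rightarrow> nat"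
  assumes len: "\<And>i. i \<in> I \<Longrightarrow> length (F i) = n"
    and dist: "\<And>i. i \<in> I \<Longrightarrow> int_letters_distinct (F i)"
    and diamonds: "\<And>i p. i \<in> I \<Longrightarrow> p < n \<Longrightarrow> F i ! p = None \<longleftrightarrow> p mod 3 = ph i"
    and phases: "\<And>e. e < 3 \<Longrightarrow> \<exists>i\<in>I. ph i = e"
  obtains \<rho> G where "is_perm n \<rho>" and "\<And>c. c < 3 \<Longrightarrow> G c \<in> I \<and> ph (G c) = Suc c mod 3"
    and "\<And>p q. p < n \<Longrightarrow> q < n \<Longrightarrow> p mod 3 = q mod 3 \<Longrightarrow>
        \<rho> ! p < \<rho> ! q \<longleftrightarrow> the (F (G (p mod 3)) ! p) < the (F (G (p mod 3)) ! q)"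
proof -
  have "\<forall>c\<in>{..<3}. \<exists>j. j \<in> I \<and> ph j = Suc c mod 3"
    using phases by (simp add: Bex_def)
  from bchoice[OF this] obtain G where G: "\<forall>c\<in>{..<3}. G c \<in> I \<and> ph (G c) = Suc c mod 3"
    by blast
  define R where "R c p = the (F (G c) ! p)" for c p
  have "inj_on (R c) {p. p < n \<and> p mod 3 = c}" for c
  proof (cases "c < 3")
    case True
    then have "c \<noteq> Suc c mod 3" and "G c \<in> I"
      using G by (auto simp: mod_Suc)
    then have "{p. p < n \<and> p mod 3 = c} \<subseteq> int_positions (F (G c))"
      using int_positions_eq[OF len diamonds] G True by auto
    then show ?thesis
      unfolding R_def using inj_on_subset inj_on_letters dist \<open>G c \<in> I\<close> by blast
  next
    case False
    then have "{p. p < n \<and> p mod 3 = c} = {}"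
      by auto
    then show ?thesis
      by (simp only: inj_on_empty)
  qed
  then obtain \<rho> where "is_perm n \<rho>"
    and "\<And>p q. p < n \<Longrightarrow> q < n \<Longrightarrow> p mod 3 = q mod 3 \<Longrightarrow>
        \<rho> ! p < \<rho> ! q \<longleftrightarrow> R (p mod 3) p < R (p mod 3) q"
    using exists_perm_ordering_classes[where cls = "\<lambda>p. p mod 3" and R = R] by blast
  then show thesis
    using that[of \<rho> G] G unfolding R_def by simp
qed

lemma three_phase_factors_not_unique:
  fixes F :: "nat \<Rightarrow> letter list" and ph :: "nat \<Rightarrow> nat"
  assumes len: "\<And>i. i \<in> I \<Longrightarrow> length (F i) = n"
    and pos: "\<And>i. i \<in> I \<Longrightarrow> Some 0 \<notin> set (F i)"
    and dist: "\<And>i. i \<in> I \<Longrightarrow> int_letters_distinct (F i)"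
    and ph: "\<And>i. i \<in> I \<Longrightarrow> ph i < 3"
    and diamonds: "\<And>i p. i \<in> I \<Longrightarrow> p < n \<Longrightarrow> F i ! p = None \<longleftrightarrow> p mod 3 = ph i"
    and phases: "\<And>e. e < 3 \<Longrightarrow> \<exists>i\<in>I. ph i = e"
  shows "\<not> (\<forall>\<pi>. is_perm n \<pi> \<longrightarrow> (\<exists>!i. i \<in> I \<and> covers (F i) \<pi>))"
proof
  assume unique: "\<forall>\<pi>. is_perm n \<pi> \<longrightarrow> (\<exists>!i. i \<in> I \<and> covers (F i) \<pi>)"
  obtain \<rho> G where \<rho>: "is_perm n \<rho>" and G: "\<And>c. c < 3 \<Longrightarrow> G c \<in> I \<and> ph (G c) = Suc c mod 3"
    and \<rho>_ord: "\<And>p q. p < n \<Longrightarrow> q < n \<Longrightarrow> p mod 3 = q mod 3 \<Longrightarrow>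
        \<rho> ! p < \<rho> ! q \<longleftrightarrow> the (F (G (p mod 3)) ! p) < the (F (G (p mod 3)) ! q)"
    using exists_perm_ordered_by_next_phase[OF len dist diamonds phases] by blast
  obtain i where i: "i \<in> I" "covers (F i) \<rho>"
    using unique \<rho> by blast
  define c where "c = Suc (ph i) mod 3"
  define v where "v = G c"
  have v: "v \<in> I" "ph v = Suc c mod 3"
    using G unfolding v_def c_def by simp_all
  have residues: "{ph i, c, ph v} = {0, 1, 2}" and "ph i \<noteq> c" and "ph i \<noteq> ph v"
    using ph[OF i(1)] unfolding v(2) c_def by (auto simp: mod_Suc)
  have "the (F i ! p) < the (F i ! q) \<longleftrightarrow> the (F v ! p) < the (F v ! q)"
    if "p < n" "q < n" "p mod 3 = c" "q mod 3 = c" for p q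
  proof -
    have "p \<in> int_positions (F i)" "q \<in> int_positions (F i)"
      using that \<open>ph i \<noteq> c\<close> int_positions_eq[OF len diamonds, OF i(1) i(1)] by auto
    then show ?thesis
      using covers_imp_agrees[OF i(2)] \<rho>_ord[of p q] that unfolding agrees_def v_def by auto
  qed
  then obtain \<sigma> where "is_perm n \<sigma>" "covers (F i) \<sigma>" "covers (F v) \<sigma>"
    using exists_common_cover_mod_3[OF len[OF i(1)] len[OF v(1)] pos[OF i(1)] pos[OF v(1)]
        dist[OF i(1)] dist[OF v(1)] residues diamonds[OF i(1)] diamonds[OF v(1)]] by blast
  then have "i = v"
    using unique i(1) v(1) by blast
  then show False
    using \<open>ph i \<noteq> ph v\<close> by simp
qed

lemma length_cfactor [simp]: "length (cfactor u n i) = n"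
  by (simp add: cfactor_def)

lemma set_cfactor_subset: "0 < length u \<Longrightarrow> set (cfactor u n i) \<subseteq> set u"
  by (auto simp: cfactor_def)

lemma mod_3_shift_iff:
  fixes p k r :: nat
  assumes "r < 3"
  shows "(p + k) mod 3 = r \<longleftrightarrow> p mod 3 = (r + 2 * k) mod 3"
proof
  assume "(p + k) mod 3 = r"
  then have "(r + 2 * k) mod 3 = (p + k + 2 * k) mod 3"
    by (metis mod_add_left_eq)
  also have "\<dots> = p mod 3"
    by simp
  finally show "p mod 3 = (r + 2 * k) mod 3" ..
next
  assume "p mod 3 = (r + 2 * k) mod 3"
  then have "(p + k) mod 3 = (r + 2 * k + k) mod 3"
    by (metis mod_add_left_eq)
  also have "\<dots> = r"
    using assms by simp
  finally show "(p + k) mod 3 = r" .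
qed

lemma cfactor_None_iff_period3:
  assumes "3 dvd length u" and "0 < length u" and "r < 3"
    and "\<forall>q<length u. u ! q = None \<longleftrightarrow> (q + 1) mod 3 = r" and "p < n"
  shows "cfactor u n i ! p = None \<longleftrightarrow> p mod 3 = (r + 2 * Suc i) mod 3"
proof -
  have "((i + p) mod length u + 1) mod 3 = ((i + p) mod length u mod 3 + 1) mod 3"
    by (rule mod_add_left_eq[symmetric])
  also have "\<dots> = ((i + p) mod 3 + 1) mod 3"
    using mod_mod_cancel[OF assms(1)] by simp
  also have "\<dots> = (p + Suc i) mod 3"
    by (simp add: mod_Suc_eq add.commute)
  finally have "cfactor u n i ! p = None \<longleftrightarrow> (p + Suc i) mod 3 = r"
    using assms by (simp add: cfactor_def)
  also have "\<dots> \<longleftrightarrow> p mod 3 = (r + 2 * Suc i) mod 3"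
    by (rule mod_3_shift_iff[OF assms(3)])
  finally show ?thesis .
qed

lemma mod_3_phase_attained:
  fixes r e :: nat
  assumes "r < 3" and "e < 3"
  obtains i where "i < 3" and "(r + 2 * Suc i) mod 3 = e"
proof -
  have "r = 0 \<or> r = 1 \<or> r = 2" and "e = 0 \<or> e = 1 \<or> e = 2"
    using assms by auto
  then have "\<exists>i\<in>{0, 1, 2}. (r + 2 * Suc i) mod 3 = e"
    by auto
  then obtain i where "i \<in> {0, 1, 2}" and "(r + 2 * Suc i) mod 3 = e"
    by blast
  moreover from this(1) have "i < 3"
    by auto
  ultimately show thesis
    using that by blast
qed

theorem theorem3:
  fixes n :: nat
  assumes "n \<ge> 1"
  shows "\<not> (\<exists>u. up_cycle n u \<and> \<not> trivial_cycle u \<and> diamonds_period3 u)"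
proof
  assume "\<exists>u. up_cycle n u \<and> \<not> trivial_cycle u \<and> diamonds_period3 u"
  then obtain u where up: "up_cycle n u" and "diamonds_period3 u" by blast
  then obtain r where r: "r < 3" and dvd: "3 dvd length u"
    and diamonds: "\<forall>p<length u. u ! p = None \<longleftrightarrow> (p + 1) mod 3 = r"
    unfolding diamonds_period3_def by blast
  have "n \<le> length u" and pos: "Some 0 \<notin> set u"
    and dist: "\<forall>i<length u. int_letters_distinct (cfactor u n i)"
    and unique: "\<forall>\<pi>. is_perm n \<pi> \<longrightarrow> (\<exists>!i. i < length u \<and> covers (cfactor u n i) \<pi>)"
    using up unfolding up_cycle_def by auto
  then have "0 < length u" and "3 \<le> length u"
    using assms dvd by (auto intro: dvd_imp_le)
  have "\<not> (\<forall>\<pi>. is_perm n \<pi> \<longrightarrow> (\<exists>!i. i \<in> {..<length u} \<and> covers (cfactor u n i) \<pi>))"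
  proof (rule three_phase_factors_not_unique[where ph = "\<lambda>i. (r + 2 * Suc i) mod 3"])
    fix i p e :: nat
    show "Some 0 \<notin> set (cfactor u n i)"
      using pos set_cfactor_subset[OF \<open>0 < length u\<close>] by blast
    show "i \<in> {..<length u} \<Longrightarrow> int_letters_distinct (cfactor u n i)"
      using dist by simp
    show "p < n \<Longrightarrow> cfactor u n i ! p = None \<longleftrightarrow> p mod 3 = (r + 2 * Suc i) mod 3"
      by (rule cfactor_None_iff_period3[OF dvd \<open>0 < length u\<close> r diamonds])
    show "e < 3 \<Longrightarrow> \<exists>i\<in>{..<length u}. (r + 2 * Suc i) mod 3 = e"
      using mod_3_phase_attained[OF r] \<open>3 \<le> length u\<close> by (metis lessThan_iff order_less_le_trans)
  qed simp_all
  then show False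
    using unique by simp
qed

end
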